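(* Consider BSPR networks with $K$ relays, $K=1,2,\dots$. Suppose that for each $K$ there exists $\mathcal M\subseteq\{1,\dots,K\}$ such that $|\mathcal M|\,(0.5-p_{\textnormal{MAX}(\mathcal M)})^2\to\infty$ as $K\to\infty$, where $p_{\textnormal{MAX}(\mathcal M)}=\max_{m\in\mathcal M}p_m$ and $p_i=p_{s,i}(1-p_{i,d})+(1-p_{s,i})p_{i,d}$. Then for any $\epsilon>0$ and any rate $R<1$, uncoded transmission with forwarding relays achieves average error probability $P_e\le\epsilon$ for sufficiently large $n$ and $K$.
   Context: BSPR network with $K$ relays: at each network use $t$ the source sends $U[t]\in\{0,1\}$; relay $i$ receives $V_i[t]=U[t]\oplus Z_i[t]$, $\Pr\{Z_i=1\}=p_{s,i}\in[0,1/2]$; relay $i$ sends $X_i[t]$ and the destination receives $Y_i[t]=X_i[t]\oplus E_i[t]$, $\Pr\{E_i=1\}=p_{i,d}\in[0,1/2]$; all noises mutually independent and i.i.d. over time. Uncoded transmission with forwarding relays: the message is $W=(W_1,\dots,W_n)$ with i.i.d. uniform bits; the source sends $U[t]=W_t$; each relay forwards, $X_i[t+1]=V_i[t]$ ($X_i[1]=0$); $n$ bits are sent in $n+1$ network uses (rate $n/(n+1)$), and the destination estimates each bit $W_t$ from its received symbols $(Y_1[t+1],\dots,Y_K[t+1])$ using a suitable decoding rule. $P_e$ is the probability of erroneous decoding at the destination. *)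

theory Defs
  imports "HOL-Probability.Probability"
begin

text \<open>BSPR network with K relays (indexed 1..K), uncoded transmission of n bits
  W_1..W_n in network uses t = 1..n+1 with forwarding relays.
  Sample space: message bits w (w t = W_t for t in 1..n), source-relay noises
  z (t,i) = Z_i[t], relay-destination noises e (t,i) = E_i[t], for t in 1..n+1.
  Bits are booleans, xor is inequality.\<close>

definition net_pmf :: "nat \<Rightarrow> nat \<Rightarrow> (nat \<Rightarrow> real) \<Rightarrow> (nat \<Rightarrow> real)
    \<Rightarrow> ((nat \<Rightarrow> bool) \<times> (nat \<times> nat \<Rightarrow> bool) \<times> (nat \<times> nat \<Rightarrow> bool)) pmf" where
  "net_pmf K n ps pd =
     pair_pmf (Pi_pmf {1..n} False (\<lambda>_. bernoulli_pmf (1/2)))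
       (pair_pmf (Pi_pmf ({1..n+1} \<times> {1..K}) False (\<lambda>(t,i). bernoulli_pmf (ps i)))
                 (Pi_pmf ({1..n+1} \<times> {1..K}) False (\<lambda>(t,i). bernoulli_pmf (pd i))))"

text \<open>Source sends U[t] = W_t (for t = n+1 the value is the default False).\<close>
definition src_sig :: "(nat \<Rightarrow> bool) \<Rightarrow> nat \<Rightarrow> bool" where
  "src_sig w t = w t"

definition relay_in :: "(nat \<Rightarrow> bool) \<Rightarrow> (nat \<times> nat \<Rightarrow> bool) \<Rightarrow> nat \<Rightarrow> nat \<Rightarrow> bool" where
  "relay_in w z i t = (src_sig w t \<noteq> z (t, i))"

definition relay_out :: "(nat \<Rightarrow> bool) \<Rightarrow> (nat \<times> nat \<Rightarrow> bool) \<Rightarrow> nat \<Rightarrow> nat \<Rightarrow> bool" where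
  "relay_out w z i t = (if t \<le> 1 then False else relay_in w z i (t - 1))"

definition dest_in :: "(nat \<Rightarrow> bool) \<Rightarrow> (nat \<times> nat \<Rightarrow> bool) \<Rightarrow> (nat \<times> nat \<Rightarrow> bool)
    \<Rightarrow> nat \<Rightarrow> nat \<Rightarrow> bool" where
  "dest_in w z e i t = (relay_out w z i t \<noteq> e (t, i))"

definition received :: "nat \<Rightarrow> (nat \<Rightarrow> bool) \<Rightarrow> (nat \<times> nat \<Rightarrow> bool) \<Rightarrow> (nat \<times> nat \<Rightarrow> bool)
    \<Rightarrow> nat \<Rightarrow> (nat \<Rightarrow> bool)" where
  "received K w z e t = (\<lambda>i. if i \<in> {1..K} then dest_in w z e i (t + 1) else False)"

definition bit_error :: "nat \<Rightarrow> nat \<Rightarrow> (nat \<Rightarrow> real) \<Rightarrow> (nat \<Rightarrow> real)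
    \<Rightarrow> ((nat \<Rightarrow> bool) \<Rightarrow> bool) \<Rightarrow> nat \<Rightarrow> real" where
  "bit_error K n ps pd dec t =
     measure_pmf.prob (net_pmf K n ps pd) {(w, z, e). dec (received K w z e t) \<noteq> w t}"

definition avg_error :: "nat \<Rightarrow> nat \<Rightarrow> (nat \<Rightarrow> real) \<Rightarrow> (nat \<Rightarrow> real)
    \<Rightarrow> ((nat \<Rightarrow> bool) \<Rightarrow> bool) \<Rightarrow> real" where
  "avg_error K n ps pd dec = (\<Sum>t = 1..n. bit_error K n ps pd dec t) / real n"

definition p_end :: "(nat \<Rightarrow> real) \<Rightarrow> (nat \<Rightarrow> real) \<Rightarrow> nat \<Rightarrow> real" where
  "p_end ps pd i = ps i * (1 - pd i) + (1 - ps i) * pd i"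

end

theory Submission
  imports Defs
begin

text \<open>Relay i transmits bit W_t to the destination through the cascade of two binary symmetric
  channels, so the destination sees W_t flipped with probability p_i, independently over relays.
  Decode W_t by a majority vote over a set M of relays: it fails only if at least half of the
  relays in M flip, and since the mean number of flips is at most |M| p_MAX(M), Hoeffding's
  inequality bounds the error probability of every bit by exp (-2 |M| (1/2 - p_MAX(M))^2),
  which tends to 0 by hypothesis.\<close>

lemma Hoeffding_bernoulli_count:
  assumes fin: "finite A" and ne: "A \<noteq> {}" and q: "\<And>i. i \<in> A \<Longrightarrow> 0 \<le> q i \<and> q i \<le> 1"
    and e: "e \<ge> 0"
  shows "measure_pmf.prob (Pi_pmf A False (\<lambda>i. bernoulli_pmf (q i)))
           {f. (\<Sum>i\<in>A. q i) + e \<le> real (card {i\<in>A. f i})} \<le> exp (-2 * e\<^sup>2 / real (card A))"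
proof -
  define P where "P = Pi_pmf A False (\<lambda>i. bernoulli_pmf (q i))"
  define X :: "'a \<Rightarrow> ('a \<Rightarrow> bool) \<Rightarrow> real" where "X = (\<lambda>i f. if f i then 1 else 0)"
  have expectation_X: "measure_pmf.expectation P (X i) = q i" if i: "i \<in> A" for i
  proof -
    have "measure_pmf.expectation P (X i) =
        measure_pmf.expectation (map_pmf (\<lambda>f. f i) P) (\<lambda>b. if b then 1 else 0 :: real)"
      by (simp add: X_def)
    also have "map_pmf (\<lambda>f. f i) P = bernoulli_pmf (q i)"
      using i fin by (simp add: P_def Pi_pmf_component)
    finally show ?thesis
      using q[OF i] by simp
  qed
  have sum_X: "(\<Sum>i\<in>A. X i f) = real (card {i\<in>A. f i})" for f
  proof -
    have "(\<Sum>i\<in>A. X i f) = (\<Sum>i\<in>{i\<in>A. f i}. 1)"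
      using fin by (intro sum.mono_neutral_cong_right) (auto simp: X_def)
    thus ?thesis by simp
  qed
  interpret Hoeffding_ineq "measure_pmf P" A X "\<lambda>_. 0" "\<lambda>_. 1"
      "\<Sum>i\<in>A. measure_pmf.expectation P (X i)"
  proof unfold_locales
    show "prob_space.indep_vars (measure_pmf P) (\<lambda>_. borel) X A"
      unfolding P_def X_def
      by (intro prob_space.indep_vars_compose2[OF _ indep_vars_Pi_pmf])
         (auto simp: measure_pmf.prob_space_axioms fin)
  qed (auto simp: fin X_def)
  have "measure_pmf.prob P {f \<in> space (measure_pmf P).
          (\<Sum>i\<in>A. X i f) \<ge> (\<Sum>i\<in>A. measure_pmf.expectation P (X i)) + e}
        \<le> exp (-2 * e\<^sup>2 / (\<Sum>i\<in>A. (1 - 0)\<^sup>2))"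
    by (rule Hoeffding_ineq_ge) (use e fin ne in auto)
  moreover have "(\<Sum>i\<in>A. measure_pmf.expectation P (X i)) = (\<Sum>i\<in>A. q i)"
    using expectation_X by simp
  ultimately show ?thesis
    by (simp add: P_def sum_X)
qed

lemma Pi_pmf_reindex_subset:
  assumes "finite A" "finite B" "inj_on g A" "g ` A \<subseteq> B"
  shows "map_pmf (\<lambda>f i. if i \<in> A then f (g i) else d) (Pi_pmf B d p) = Pi_pmf A d (\<lambda>i. p (g i))"
  using assms
proof (induction A arbitrary: B rule: finite_induct)
  case empty
  then show ?case by (simp add: map_pmf_const)
next
  case (insert x A)
  define B' where "B' = B - {g x}"
  have gx: "g x \<in> B" "g x \<notin> g ` A"
    using insert by auto
  have B: "B = insert (g x) B'" "g x \<notin> B'" "finite B'"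
    using gx insert.prems by (auto simp: B'_def)
  have IH: "map_pmf (\<lambda>f i. if i \<in> A then f (g i) else d) (Pi_pmf B' d p) = Pi_pmf A d (\<lambda>i. p (g i))"
    by (rule insert.IH) (use insert gx in \<open>auto simp: B'_def image_iff\<close>)
  have update: "(\<lambda>i. if i \<in> insert x A then (f(g x := y)) (g i) else d) =
        (\<lambda>i. if i \<in> A then f (g i) else d)(x := y)" for f y
    using gx(2) insert.hyps by (auto simp: fun_eq_iff; metis image_eqI)
  have "map_pmf (\<lambda>f i. if i \<in> insert x A then f (g i) else d) (Pi_pmf B d p)
     = map_pmf (\<lambda>(y, f). (\<lambda>i. if i \<in> A then f (g i) else d)(x := y))
         (pair_pmf (p (g x)) (Pi_pmf B' d p))"
    unfolding B(1) Pi_pmf_insert[OF B(3,2)] pmf.map_comp o_def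
    by (intro map_pmf_cong refl) (auto simp only: update split: prod.splits)
  also have "\<dots> = map_pmf (\<lambda>(y, h). h(x := y))
      (pair_pmf (p (g x)) (map_pmf (\<lambda>f i. if i \<in> A then f (g i) else d) (Pi_pmf B' d p)))"
    by (simp add: pair_map_pmf2 pmf.map_comp o_def case_prod_unfold)
  also have "\<dots> = Pi_pmf (insert x A) d (\<lambda>i. p (g i))"
    unfolding IH by (rule Pi_pmf_insert[symmetric]) (use insert in auto)
  finally show ?case .
qed

lemma pair_Pi_pmf:
  assumes "finite A"
  shows "map_pmf (\<lambda>(f, h) i. (f i, h i)) (pair_pmf (Pi_pmf A d1 p) (Pi_pmf A d2 q)) =
         Pi_pmf A (d1, d2) (\<lambda>i. pair_pmf (p i) (q i))"
  using assms
proof (induction A rule: finite_induct)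
  case empty
  then show ?case by (simp add: pair_return_pmf1 map_pmf_def bind_return_pmf)
next
  case (insert x A)
  let ?P = "Pi_pmf A d1 p" and ?Q = "Pi_pmf A d2 q"
  have "map_pmf (\<lambda>(f, h) i. (f i, h i)) (pair_pmf (Pi_pmf (insert x A) d1 p) (Pi_pmf (insert x A) d2 q))
    = do {y \<leftarrow> p x; f \<leftarrow> ?P; z \<leftarrow> q x; h \<leftarrow> ?Q; return_pmf (\<lambda>i. ((f(x:=y)) i, (h(x:=z)) i))}"
    using insert by (simp add: Pi_pmf_insert' pair_pmf_def map_pmf_def bind_assoc_pmf bind_return_pmf)
  also have "\<dots> = do {y \<leftarrow> p x; z \<leftarrow> q x; f \<leftarrow> ?P; h \<leftarrow> ?Q; return_pmf (\<lambda>i. ((f(x:=y)) i, (h(x:=z)) i))}"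
    by (intro bind_pmf_cong refl bind_commute_pmf)
  also have "\<dots> = do {yz \<leftarrow> pair_pmf (p x) (q x);
                      F \<leftarrow> map_pmf (\<lambda>(f, h) i. (f i, h i)) (pair_pmf ?P ?Q); return_pmf (F(x:=yz))}"
    by (simp add: pair_pmf_def map_pmf_def bind_assoc_pmf bind_return_pmf)
       (intro bind_pmf_cong refl arg_cong[where f=return_pmf], auto simp: fun_eq_iff)
  also have "\<dots> = Pi_pmf (insert x A) (d1, d2) (\<lambda>i. pair_pmf (p i) (q i))"
    using insert by (simp add: Pi_pmf_insert')
  finally show ?case .
qed

lemma bernoulli_pmf_xor:
  assumes "0 \<le> a" "a \<le> 1" "0 \<le> b" "b \<le> 1"
  shows "map_pmf (\<lambda>(x, y). x \<noteq> y) (pair_pmf (bernoulli_pmf a) (bernoulli_pmf b)) =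
         bernoulli_pmf (a * (1 - b) + (1 - a) * b)"
proof (rule pmf_eqI)
  fix c :: bool
  have "0 \<le> a * (1 - b)" "0 \<le> (1 - a) * b" "0 \<le> a * b" "0 \<le> (1 - a) * (1 - b)"
    using assms by simp_all
  then have range: "0 \<le> a * (1 - b) + (1 - a) * b" "a * (1 - b) + (1 - a) * b \<le> 1"
    by (auto simp: algebra_simps)
  have "map_pmf (\<lambda>(x, y). x \<noteq> y) (pair_pmf (bernoulli_pmf a) (bernoulli_pmf b)) =
        bernoulli_pmf a \<bind> (\<lambda>x. bernoulli_pmf b \<bind> (\<lambda>y. return_pmf (x \<noteq> y)))"
    by (simp add: pair_pmf_def map_pmf_def bind_assoc_pmf bind_return_pmf)
  then show "pmf (map_pmf (\<lambda>(x, y). x \<noteq> y) (pair_pmf (bernoulli_pmf a) (bernoulli_pmf b))) c =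
      pmf (bernoulli_pmf (a * (1 - b) + (1 - a) * b)) c"
    using assms range by (cases c) (simp_all add: pmf_bind algebra_simps)
qed

lemma p_end_bounds:
  assumes "0 \<le> ps i" "ps i \<le> 1/2" "0 \<le> pd i" "pd i \<le> 1/2"
  shows "0 \<le> p_end ps pd i" "p_end ps pd i \<le> 1/2"
proof -
  have "0 \<le> (1/2 - ps i) * (1/2 - pd i)" "0 \<le> ps i * (1 - pd i)" "0 \<le> (1 - ps i) * pd i"
    using assms by auto
  then show "0 \<le> p_end ps pd i" "p_end ps pd i \<le> 1/2"
    by (auto simp: p_end_def algebra_simps)
qed

text \<open>The end-to-end flip of relay i on the t-th bit: the destination observes
  W_t xor Z_i[t] xor E_i[t+1].\<close>
definition relay_flips :: "nat set \<Rightarrow> nat \<Rightarrow>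
    (nat \<Rightarrow> bool) \<times> (nat \<times> nat \<Rightarrow> bool) \<times> (nat \<times> nat \<Rightarrow> bool) \<Rightarrow> nat \<Rightarrow> bool" where
  "relay_flips A t = (\<lambda>(w, z, e) i. if i \<in> A then z (t, i) \<noteq> e (t + 1, i) else False)"

lemma received_eq_xor_relay_flips:
  assumes "i \<in> A" "A \<subseteq> {1..K}" "t \<ge> 1"
  shows "received K w z e t i = (w t \<noteq> relay_flips A t (w, z, e) i)"
  using assms by (auto simp: received_def dest_in_def relay_out_def relay_in_def src_sig_def
      relay_flips_def)

lemma relay_flips_distribution:
  assumes A: "A \<subseteq> {1..K}" and t: "t \<in> {1..n}"
    and range: "\<And>i. i \<in> A \<Longrightarrow> 0 \<le> ps i \<and> ps i \<le> 1 \<and> 0 \<le> pd i \<and> pd i \<le> 1"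
  shows "map_pmf (relay_flips A t) (net_pmf K n ps pd) = Pi_pmf A False (\<lambda>i. bernoulli_pmf (p_end ps pd i))"
proof -
  define I where "I = {1..n+1} \<times> {1..K}"
  define restrict_time :: "nat \<Rightarrow> (nat \<times> nat \<Rightarrow> bool) \<Rightarrow> nat \<Rightarrow> bool"
    where "restrict_time s z = (\<lambda>i. if i \<in> A then z (s, i) else False)" for s z
  let ?Z = "Pi_pmf A False (\<lambda>i. bernoulli_pmf (ps i))"
  let ?E = "Pi_pmf A False (\<lambda>i. bernoulli_pmf (pd i))"
  have finA: "finite A"
    using A finite_subset by blast
  have Z: "map_pmf (restrict_time t) (Pi_pmf I False (\<lambda>(t, i). bernoulli_pmf (ps i))) = ?Z"
    unfolding restrict_time_def
    by (subst Pi_pmf_reindex_subset[where g="\<lambda>i. (t, i)"])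
       (use A t finA in \<open>auto simp: I_def inj_on_def\<close>)
  have E: "map_pmf (restrict_time (t+1)) (Pi_pmf I False (\<lambda>(t, i). bernoulli_pmf (pd i))) = ?E"
    unfolding restrict_time_def
    by (subst Pi_pmf_reindex_subset[where g="\<lambda>i. (t+1, i)"])
       (use A t finA in \<open>auto simp: I_def inj_on_def\<close>)
  have "map_pmf (relay_flips A t) (net_pmf K n ps pd)
      = map_pmf (\<lambda>(f, h) i. f i \<noteq> h i)
          (map_pmf (\<lambda>(z, e). (restrict_time t z, restrict_time (t+1) e)) (map_pmf snd (net_pmf K n ps pd)))"
    unfolding pmf.map_comp
    by (intro map_pmf_cong refl) (auto simp: restrict_time_def relay_flips_def fun_eq_iff)
  also have "\<dots> = map_pmf (\<lambda>(f, h) i. f i \<noteq> h i) (pair_pmf ?Z ?E)"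
    unfolding net_pmf_def map_snd_pair_pmf map_pair Z[unfolded I_def] E[unfolded I_def] ..
  also have "\<dots> = map_pmf (\<lambda>k. (\<lambda>(a, b). a \<noteq> b) \<circ> k) (map_pmf (\<lambda>(f, h) i. (f i, h i)) (pair_pmf ?Z ?E))"
    by (simp add: pmf.map_comp o_def case_prod_unfold)
  also have "\<dots> = Pi_pmf A False
      (\<lambda>i. map_pmf (\<lambda>(a, b). a \<noteq> b) (pair_pmf (bernoulli_pmf (ps i)) (bernoulli_pmf (pd i))))"
    unfolding pair_Pi_pmf[OF finA] by (rule Pi_pmf_map[symmetric]) (auto simp: finA)
  also have "\<dots> = Pi_pmf A False (\<lambda>i. bernoulli_pmf (p_end ps pd i))"
    using range bernoulli_pmf_xor by (intro Pi_pmf_cong refl) (simp add: p_end_def)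
  finally show ?thesis .
qed

definition majority :: "nat set \<Rightarrow> (nat \<Rightarrow> bool) \<Rightarrow> bool" where
  "majority A y \<longleftrightarrow> card A < 2 * card {i\<in>A. y i}"

lemma majority_wrong_imp_half_flipped:
  assumes "finite A" and y: "\<And>i. i \<in> A \<Longrightarrow> y i = (b \<noteq> f i)" and wrong: "majority A y \<noteq> b"
  shows "card A \<le> 2 * card {i\<in>A. f i}"
proof (cases b)
  case False
  then show ?thesis
    using wrong y by (simp add: majority_def cong: conj_cong)
next
  case True
  have "card {i\<in>A. f i} + card {i\<in>A. \<not> f i} = card A"
    using \<open>finite A\<close> by (subst card_Un_disjoint[symmetric]) (auto intro: arg_cong[where f=card])
  then show ?thesis
    using wrong y True by (simp add: majority_def cong: conj_cong)
qed

lemma bit_error_majority_le: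
  assumes A: "A \<subseteq> {1..K}" and ne: "A \<noteq> {}" and t: "t \<in> {1..n}"
    and range: "\<And>i. i \<in> A \<Longrightarrow> 0 \<le> ps i \<and> ps i \<le> 1/2 \<and> 0 \<le> pd i \<and> pd i \<le> 1/2"
  shows "bit_error K n ps pd (majority A) t \<le> exp (-2 * real (card A) * (1/2 - Max (p_end ps pd ` A))\<^sup>2)"
proof -
  have finA: "finite A"
    using A finite_subset by blast
  define pmax where "pmax = Max (p_end ps pd ` A)"
  define mu where "mu = (\<Sum>i\<in>A. p_end ps pd i)"
  define gap where "gap = real (card A) / 2 - mu"
  define P where "P = Pi_pmf A False (\<lambda>i. bernoulli_pmf (p_end ps pd i))"
  have p_end: "0 \<le> p_end ps pd i" "p_end ps pd i \<le> 1/2" if "i \<in> A" for i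
    using range[OF that] p_end_bounds by blast+
  have "mu \<le> (\<Sum>i\<in>A. pmax)"
    unfolding mu_def pmax_def using finA by (intro sum_mono Max_ge) auto
  then have gap_ge: "real (card A) * (1/2 - pmax) \<le> gap"
    by (simp add: gap_def algebra_simps)
  have "pmax \<le> 1/2"
    unfolding pmax_def using finA ne p_end by (subst Max_le_iff) auto
  then have gap_nonneg: "0 \<le> real (card A) * (1/2 - pmax)"
    by simp
  have flips: "map_pmf (relay_flips A t) (net_pmf K n ps pd) = P"
    unfolding P_def
  proof (rule relay_flips_distribution[OF A t])
    show "0 \<le> ps i \<and> ps i \<le> 1 \<and> 0 \<le> pd i \<and> pd i \<le> 1" if "i \<in> A" for i
      using range[OF that] by linarith
  qed
  have "{(w, z, e). majority A (received K w z e t) \<noteq> w t}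
      \<subseteq> relay_flips A t -` {f. card A \<le> 2 * card {i\<in>A. f i}}"
  proof
    fix x
    assume "x \<in> {(w, z, e). majority A (received K w z e t) \<noteq> w t}"
    then obtain w z e where x: "x = (w, z, e)" and wrong: "majority A (received K w z e t) \<noteq> w t"
      by blast
    have "card A \<le> 2 * card {i\<in>A. relay_flips A t (w, z, e) i}"
      by (rule majority_wrong_imp_half_flipped[OF finA _ wrong])
         (use A t in \<open>simp add: received_eq_xor_relay_flips\<close>)
    then show "x \<in> relay_flips A t -` {f. card A \<le> 2 * card {i\<in>A. f i}}"
      by (simp add: x)
  qed
  then have "bit_error K n ps pd (majority A) t
      \<le> measure_pmf.prob (map_pmf (relay_flips A t) (net_pmf K n ps pd)) {f. card A \<le> 2 * card {i\<in>A. f i}}"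
    unfolding bit_error_def measure_map_pmf by (rule measure_pmf.finite_measure_mono) simp
  also have "\<dots> \<le> measure_pmf.prob P {f. mu + gap \<le> real (card {i\<in>A. f i})}"
    unfolding flips by (rule measure_pmf.finite_measure_mono) (auto simp: gap_def)
  also have "\<dots> \<le> exp (-2 * gap\<^sup>2 / real (card A))"
    unfolding P_def mu_def
    by (rule Hoeffding_bernoulli_count[OF finA ne])
       (use p_end in fastforce, use gap_nonneg gap_ge in linarith)
  also have "\<dots> \<le> exp (-2 * real (card A) * (1/2 - pmax)\<^sup>2)"
  proof -
    have "(real (card A) * (1/2 - pmax))\<^sup>2 \<le> gap\<^sup>2"
      using gap_nonneg gap_ge by (intro power_mono) auto
    then have "real (card A) * (real (card A) * (1/2 - pmax)\<^sup>2) \<le> gap\<^sup>2"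
      by (simp add: power_mult_distrib power2_eq_square mult_ac)
    moreover have "real (card A) > 0"
      using finA ne by (simp add: card_gt_0_iff)
    ultimately show ?thesis
      by (simp add: field_simps)
  qed
  finally show ?thesis
    unfolding pmax_def .
qed

lemma avg_error_le:
  assumes "\<epsilon> \<ge> 0" "\<And>t. t \<in> {1..n} \<Longrightarrow> bit_error K n ps pd dec t \<le> \<epsilon>"
  shows "avg_error K n ps pd dec \<le> \<epsilon>"
proof -
  have "(\<Sum>t = 1..n. bit_error K n ps pd dec t) \<le> real n * \<epsilon>"
    using sum_mono[of "{1..n}", OF assms(2)] by simp
  then show ?thesis
    using assms(1) by (cases "n = 0") (simp_all add: avg_error_def divide_le_eq mult.commute)
qed

lemma avg_error_majority_le:
  assumes "A \<subseteq> {1..K}" "A \<noteq> {}"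
    and "\<And>i. i \<in> A \<Longrightarrow> 0 \<le> ps i \<and> ps i \<le> 1/2 \<and> 0 \<le> pd i \<and> pd i \<le> 1/2"
  shows "avg_error K n ps pd (majority A) \<le> exp (-2 * real (card A) * (1/2 - Max (p_end ps pd ` A))\<^sup>2)"
  using bit_error_majority_le[OF assms(1,2) _ assms(3)] by (intro avg_error_le) auto

theorem corollary3:
  fixes ps pd :: "nat \<Rightarrow> nat \<Rightarrow> real"
  assumes ps_range: "\<And>K i. i \<in> {1..K} \<Longrightarrow> 0 \<le> ps K i \<and> ps K i \<le> 1/2"
    and pd_range: "\<And>K i. i \<in> {1..K} \<Longrightarrow> 0 \<le> pd K i \<and> pd K i \<le> 1/2"
    and M: "\<exists>M :: nat \<Rightarrow> nat set. (\<forall>K. M K \<subseteq> {1..K}) \<and>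
             filterlim (\<lambda>K. real (card (M K)) *
                 (1/2 - Max ((\<lambda>m. p_end (ps K) (pd K) m) ` M K))\<^sup>2) at_top sequentially"
  shows "\<forall>\<epsilon>>0. \<forall>R<1. \<exists>N K0. \<forall>n\<ge>N. \<forall>K\<ge>K0.
           R \<le> real n / real (n + 1) \<and>
           (\<exists>dec. avg_error K n (ps K) (pd K) dec \<le> \<epsilon>)"
proof (intro allI impI)
  fix \<epsilon> R :: real
  assume \<epsilon>: "\<epsilon> > 0" and R: "R < 1"
  obtain M where M_sub: "\<And>K. M K \<subseteq> {1..K}" and lim: "filterlim (\<lambda>K. real (card (M K)) *
                 (1/2 - Max (p_end (ps K) (pd K) ` M K))\<^sup>2) at_top sequentially"
    using M by blast
  obtain K0 where K0: "\<And>K. K \<ge> K0 \<Longrightarrow>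
      max 1 (- ln \<epsilon> / 2) \<le> real (card (M K)) * (1/2 - Max (p_end (ps K) (pd K) ` M K))\<^sup>2"
    using lim unfolding filterlim_at_top eventually_sequentially by blast
  have "eventually (\<lambda>n. R < real n / real (Suc n)) sequentially"
    using order_tendstoD(1)[OF LIMSEQ_n_over_Suc_n R] .
  then obtain N where N: "\<And>n. n \<ge> N \<Longrightarrow> R \<le> real n / real (n + 1)"
    unfolding eventually_sequentially by fastforce
  have "avg_error K n (ps K) (pd K) (majority (M K)) \<le> \<epsilon>" if "K \<ge> K0" for n K
  proof -
    let ?f = "real (card (M K)) * (1/2 - Max (p_end (ps K) (pd K) ` M K))\<^sup>2"
    have f: "max 1 (- ln \<epsilon> / 2) \<le> ?f"
      using K0[OF that] .
    then have "M K \<noteq> {}"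
      by auto
    moreover have "\<And>i. i \<in> M K \<Longrightarrow> 0 \<le> ps K i \<and> ps K i \<le> 1/2 \<and> 0 \<le> pd K i \<and> pd K i \<le> 1/2"
      using M_sub ps_range pd_range by blast
    ultimately have "avg_error K n (ps K) (pd K) (majority (M K)) \<le> exp (-2 * ?f)"
      using avg_error_majority_le[OF M_sub] by (simp add: mult.assoc)
    also have "\<dots> \<le> exp (ln \<epsilon>)"
      using f by simp
    finally show ?thesis
      using \<epsilon> by simp
  qed
  with N show "\<exists>N K0. \<forall>n\<ge>N. \<forall>K\<ge>K0. R \<le> real n / real (n + 1) \<and>
      (\<exists>dec. avg_error K n (ps K) (pd K) dec \<le> \<epsilon>)"
    by blast
qed

end
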